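(* Assume every tuple $t\in R_x$ has $w_{tj}>0$ for at least one $j$, so that all marginal gains $\mathbb{Q}(B\cup\{t\})-\mathbb{Q}(B)$ for $t\notin B$ are strictly positive, and assume $K\le N$. Define $$\kappa=1-\min_{t\in R_x}\ \min_{A,B\subseteq R_x\setminus\{t\}}\frac{\mathbb{Q}(A\cup\{t\})-\mathbb{Q}(A)}{\mathbb{Q}(B\cup\{t\})-\mathbb{Q}(B)}.$$ Let $O\subseteq R_x$ with $|O|\le K$ be an optimal deletion set, i.e. one maximizing $\mathbb{Q}$ among all sets of size at most $K$. Let $\Delta D$ be the output of the deletion-only greedy procedure, defined as follows. Start with $\Delta D_0=\emptyset$. For $i=0,\dots,K-1$, set $\Delta D_{i+1}=\Delta D_i\cup\{t\}$, where $t\in R_x\setminus \Delta D_i$ maximizes $\mathbb{Q}(\Delta D_i\cup\{t\})$. Finally $\Delta D=\Delta D_K$. Then $$\mathbb{Q}(\Delta D)\ \ge\ (1-\kappa)\,\mathbb{Q}(O).$$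
   Context: Setting: $R_x=\{t_1,\dots,t_N\}$ and $M$ queries, with joint weights $w_{ij}\in\mathbb{Z}_{\ge0}$ and $C_j=\sum_{i=1}^N w_{ij}$. The deletion-only total Qerror is $\mathbb{Q}(X)=\sum_{j=1}^M\frac{C_j+1}{C_j+1-\sum_{t_i\in X}w_{ij}}$ for $X\subseteq R_x$, where $X$ is the set of deleted tuples, and $K$ is the attack budget. *)

theory Defs
  imports Complex_Main
begin

text \<open>Tuples have type 'a; the relation R_x is a finite set R of tuples.
  Queries are indexed by j < M; w t j is the joint weight of tuple t and query j.\<close>

definition Ccnt :: "'a set \<Rightarrow> ('a \<Rightarrow> nat \<Rightarrow> nat) \<Rightarrow> nat \<Rightarrow> nat" where
  "Ccnt R w j = (\<Sum>t\<in>R. w t j)"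

definition Qerr :: "'a set \<Rightarrow> nat \<Rightarrow> ('a \<Rightarrow> nat \<Rightarrow> nat) \<Rightarrow> 'a set \<Rightarrow> real" where
  "Qerr R M w X = (\<Sum>j<M. (real (Ccnt R w j) + 1) /
                          (real (Ccnt R w j) + 1 - real (\<Sum>t\<in>X. w t j)))"

definition kappa :: "'a set \<Rightarrow> nat \<Rightarrow> ('a \<Rightarrow> nat \<Rightarrow> nat) \<Rightarrow> real" where
  "kappa R M w = 1 - Min {(Qerr R M w (insert t A) - Qerr R M w A) /
                          (Qerr R M w (insert t B) - Qerr R M w B) | t A B.
                          t \<in> R \<and> A \<subseteq> R - {t} \<and> B \<subseteq> R - {t}}"

definition greedy_run :: "'a set \<Rightarrow> nat \<Rightarrow> ('a \<Rightarrow> nat \<Rightarrow> nat) \<Rightarrow> nat \<Rightarrow> (nat \<Rightarrow> 'a set) \<Rightarrow> bool" where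
  "greedy_run R M w K D \<longleftrightarrow> D 0 = {} \<and>
     (\<forall>i<K. \<exists>t\<in>R - D i. D (Suc i) = insert t (D i) \<and>
        (\<forall>t'\<in>R - D i. Qerr R M w (insert t' (D i)) \<le> Qerr R M w (insert t (D i))))"

definition optimal_deletion :: "'a set \<Rightarrow> nat \<Rightarrow> ('a \<Rightarrow> nat \<Rightarrow> nat) \<Rightarrow> nat \<Rightarrow> 'a set \<Rightarrow> bool" where
  "optimal_deletion R M w K Opt \<longleftrightarrow> Opt \<subseteq> R \<and> card Opt \<le> K \<and>
     (\<forall>X. X \<subseteq> R \<and> card X \<le> K \<longrightarrow> Qerr R M w X \<le> Qerr R M w Opt)"

end

theory Submission imports Defs begin

text \<open>Let \<open>m = 1 - \<kappa>\<close> be the smallest ratio of two marginal gains of the same tuple, so that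
  \<open>m \<cdot> (Q(B \<union> {u}) - Q(B)) \<le> Q(A \<union> {u}) - Q(A)\<close> for all \<open>A, B\<close> avoiding \<open>u\<close>.
  Split \<open>Q(O) - Q(\<emptyset>)\<close> into one marginal gain per element of \<open>O\<close>. An element of \<open>O\<close> picked by the
  greedy procedure at step \<open>i\<close> is charged to the gain of step \<open>i\<close>; since \<open>|O| \<le> K\<close>, the remaining
  elements of \<open>O\<close> can be charged to distinct steps whose pick lies outside \<open>O\<close>, and at each such
  step the greedy pick gains at least as much as the charged element would have.
  Hence \<open>m \<cdot> (Q(O) - Q(\<emptyset>)) \<le> Q(\<Delta>D) - Q(\<emptyset>)\<close>, and \<open>Q(\<emptyset>) = M \<ge> 0\<close> with \<open>m \<le> 1\<close> finishes.\<close>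

lemma sum_le_sum_if_card_le:
  fixes x :: "'a \<Rightarrow> 'c::ordered_comm_monoid_add" and y :: "'b \<Rightarrow> 'c"
  assumes "finite S" "finite J" "card S \<le> card J"
    and "\<And>u i. u \<in> S \<Longrightarrow> i \<in> J \<Longrightarrow> x u \<le> y i"
    and "\<And>i. i \<in> J \<Longrightarrow> 0 \<le> y i"
  shows "sum x S \<le> sum y J"
proof -
  obtain f where f: "f ` S \<subseteq> J" "inj_on f S"
    using card_le_inj[OF assms(1-3)] by blast
  have "sum x S \<le> sum (y \<circ> f) S"
    using f(1) assms(4) by (intro sum_mono) auto
  also have "\<dots> = sum y (f ` S)"
    using f(2) by (simp add: sum.reindex)
  also have "\<dots> \<le> sum y J"
    using f(1) assms(2,5) by (intro sum_mono2) auto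
  finally show ?thesis .
qed

lemma telescoping_marginal_gains:
  fixes Q :: "'a set \<Rightarrow> 'b::ab_group_add"
  assumes "finite X"
  shows "\<exists>B. (\<forall>u\<in>X. B u \<subseteq> X - {u}) \<and>
    Q X - Q {} = (\<Sum>u\<in>X. Q (insert u (B u)) - Q (B u))"
  using assms
proof (induction X rule: finite_induct)
  case empty
  then show ?case by simp
next
  case (insert x F)
  then obtain B where B: "\<forall>u\<in>F. B u \<subseteq> F - {u}"
    and sum_F: "Q F - Q {} = (\<Sum>u\<in>F. Q (insert u (B u)) - Q (B u))"
    by blast
  let ?B = "B(x := F)"
  have "(\<Sum>u\<in>F. Q (insert u (?B u)) - Q (?B u)) = (\<Sum>u\<in>F. Q (insert u (B u)) - Q (B u))"
    using insert.hyps(2) by (intro sum.cong) auto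
  then have "(\<Sum>u\<in>insert x F. Q (insert u (?B u)) - Q (?B u))
      = Q (insert x F) - Q F + (\<Sum>u\<in>F. Q (insert u (B u)) - Q (B u))"
    using insert.hyps by simp
  also have "\<dots> = Q (insert x F) - Q {}"
    unfolding sum_F[symmetric] by (simp add: algebra_simps)
  finally show ?case
    using B insert.hyps(2) by (intro exI[of _ ?B]) auto
qed

locale greedy_selection =
  fixes R :: "'a set" and Q :: "'a set \<Rightarrow> real" and K :: nat
    and D :: "nat \<Rightarrow> 'a set" and d :: "nat \<Rightarrow> 'a"
  assumes D_0: "D 0 = {}"
    and d_mem: "i < K \<Longrightarrow> d i \<in> R - D i"
    and D_Suc: "i < K \<Longrightarrow> D (Suc i) = insert (d i) (D i)"
    and d_greedy: "i < K \<Longrightarrow> t \<in> R - D i \<Longrightarrow> Q (insert t (D i)) \<le> Q (insert (d i) (D i))"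
begin

lemma D_eq_image: "i \<le> K \<Longrightarrow> D i = d ` {..<i}"
  by (induction i) (simp_all add: D_0 D_Suc lessThan_Suc)

lemma D_subset: "i \<le> K \<Longrightarrow> D i \<subseteq> R"
  using D_eq_image d_mem by fastforce

lemma D_subset_D_K: "i \<le> K \<Longrightarrow> D i \<subseteq> D K"
  using D_eq_image[of i] D_eq_image[of K] by auto

lemma inj_on_d: "inj_on d {..<K}"
proof (rule linorder_inj_onI)
  fix i j assume "i < j" "i \<in> {..<K}" "j \<in> {..<K}"
  then have "d i \<in> D j" using D_eq_image[of j] by auto
  then show "d i \<noteq> d j" using d_mem[of j] \<open>j \<in> {..<K}\<close> by auto
qed auto

lemma Int_D_K_eq_image: "X \<inter> D K = d ` ({..<K} \<inter> d -` X)"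
  using D_eq_image[of K] by auto

lemma card_Diff_D_K_le:
  assumes "finite X" "card X \<le> K"
  shows "card (X - D K) \<le> card ({..<K} - d -` X)"
proof -
  have "card (X - D K) + card ({..<K} \<inter> d -` X) = card X"
    using card_Int_Diff[OF assms(1), of "D K"] Int_D_K_eq_image[of X]
      card_image[OF inj_on_subset[OF inj_on_d]] by simp
  moreover have "card ({..<K} \<inter> d -` X) + card ({..<K} - d -` X) = K"
    using card_Int_Diff[of "{..<K}" "d -` X"] by simp
  ultimately show ?thesis
    using assms(2) by linarith
qed

lemma greedy_step_dominates:
  assumes ratio: "\<And>t A B. t \<in> R \<Longrightarrow> A \<subseteq> R - {t} \<Longrightarrow> B \<subseteq> R - {t} \<Longrightarrow>
      m * (Q (insert t B) - Q B) \<le> Q (insert t A) - Q A"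
    and "u \<in> R" "B \<subseteq> R - {u}" "i < K" "u \<notin> D i"
  shows "m * (Q (insert u B) - Q B) \<le> Q (D (Suc i)) - Q (D i)"
proof -
  have "m * (Q (insert u B) - Q B) \<le> Q (insert u (D i)) - Q (D i)"
    using ratio[of u "D i" B] D_subset[of i] assms(2-5) by auto
  also have "\<dots> \<le> Q (D (Suc i)) - Q (D i)"
    using d_greedy D_Suc assms(2,4,5) by auto
  finally show ?thesis .
qed

lemma greedy_ratio_bound:
  assumes Opt: "Opt \<subseteq> R" "finite Opt" "card Opt \<le> K"
    and mono: "\<And>t A. t \<in> R \<Longrightarrow> A \<subseteq> R - {t} \<Longrightarrow> Q A \<le> Q (insert t A)"
    and ratio: "\<And>t A B. t \<in> R \<Longrightarrow> A \<subseteq> R - {t} \<Longrightarrow> B \<subseteq> R - {t} \<Longrightarrow>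
      m * (Q (insert t B) - Q B) \<le> Q (insert t A) - Q A"
  shows "m * (Q Opt - Q {}) \<le> Q (D K) - Q {}"
proof -
  define gain where "gain i = Q (D (Suc i)) - Q (D i)" for i
  have gain_nonneg: "0 \<le> gain i" if "i < K" for i
    using mono[of "d i" "D i"] d_mem[OF that] D_subset[of i] D_Suc[OF that] that
    unfolding gain_def by auto
  obtain B where B: "\<forall>u\<in>Opt. B u \<subseteq> Opt - {u}"
    and sum_Opt: "Q Opt - Q {} = (\<Sum>u\<in>Opt. Q (insert u (B u)) - Q (B u))"
    using telescoping_marginal_gains[OF Opt(2)] by blast
  define charge where "charge u = m * (Q (insert u (B u)) - Q (B u))" for u
  have charge_le: "charge u \<le> gain i" if "u \<in> Opt" "i < K" "u \<notin> D i" for u i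
    using greedy_step_dominates[OF ratio] B Opt(1) that unfolding charge_def gain_def by blast
  define hits where "hits = {..<K} \<inter> d -` Opt"
  define misses where "misses = {..<K} - d -` Opt"
  have "inj_on d hits"
    using inj_on_d unfolding hits_def by (rule inj_on_subset) auto
  then have "sum charge (Opt \<inter> D K) = (\<Sum>i\<in>hits. charge (d i))"
    unfolding Int_D_K_eq_image hits_def by (simp add: sum.reindex)
  also have "\<dots> \<le> sum gain hits"
    using charge_le d_mem unfolding hits_def by (intro sum_mono) auto
  finally have bound_picked: "sum charge (Opt \<inter> D K) \<le> sum gain hits" .
  have "card (Opt - D K) \<le> card misses"
    using card_Diff_D_K_le[OF Opt(2,3)] unfolding misses_def .
  then have bound_missed: "sum charge (Opt - D K) \<le> sum gain misses"
  proof (rule sum_le_sum_if_card_le[rotated 2])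
    show "charge u \<le> gain i" if "u \<in> Opt - D K" "i \<in> misses" for u i
      using charge_le[of u i] D_subset_D_K[of i] that unfolding misses_def by auto
  qed (use Opt(2) gain_nonneg in \<open>auto simp: misses_def\<close>)
  have "m * (Q Opt - Q {}) = sum charge (Opt \<inter> D K) + sum charge (Opt - D K)"
    unfolding sum_Opt charge_def sum_distrib_left using Opt(2) by (rule sum.Int_Diff)
  also have "\<dots> \<le> sum gain hits + sum gain misses"
    using bound_picked bound_missed by linarith
  also have "\<dots> = (\<Sum>i<K. gain i)"
    unfolding hits_def misses_def by (rule sum.Int_Diff[symmetric]) simp
  also have "\<dots> = Q (D K) - Q {}"
    using sum_lessThan_telescope[of "\<lambda>i. Q (D i)" K] D_0 unfolding gain_def by simp
  finally show ?thesis .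
qed

end

lemma greedy_run_obtains_selection:
  assumes "greedy_run R M w K D"
  obtains d where "greedy_selection R (Qerr R M w) K D d"
proof -
  have "\<forall>i\<in>{..<K}. \<exists>t. t \<in> R - D i \<and> D (Suc i) = insert t (D i) \<and>
      (\<forall>t'\<in>R - D i. Qerr R M w (insert t' (D i)) \<le> Qerr R M w (insert t (D i)))"
    using assms unfolding greedy_run_def by blast
  then obtain d where "\<forall>i\<in>{..<K}. d i \<in> R - D i \<and> D (Suc i) = insert (d i) (D i) \<and>
      (\<forall>t'\<in>R - D i. Qerr R M w (insert t' (D i)) \<le> Qerr R M w (insert (d i) (D i)))"
    by (rule bchoice[THEN exE])
  then have "greedy_selection R (Qerr R M w) K D d"
    using assms unfolding greedy_run_def by unfold_locales auto
  then show thesis by (rule that)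
qed

lemma Qerr_insert_less:
  assumes "finite R" "A \<subseteq> R" "t \<in> R - A" "\<exists>j<M. 0 < w t j"
  shows "Qerr R M w A < Qerr R M w (insert t A)"
proof -
  define C where "C j = real (Ccnt R w j) + 1" for j
  have sum_insert: "(\<Sum>x\<in>insert t A. w x j) = w t j + (\<Sum>x\<in>A. w x j)" for j
    using assms(1-3) finite_subset by (intro sum.insert) auto
  have le_C: "real (\<Sum>x\<in>insert t A. w x j) < C j" for j
  proof -
    have "(\<Sum>x\<in>insert t A. w x j) \<le> Ccnt R w j"
      unfolding Ccnt_def using assms(1-3) by (intro sum_mono2) auto
    then show ?thesis unfolding C_def by linarith
  qed
  have term_le: "C j / (C j - real (\<Sum>x\<in>A. w x j)) \<le> C j / (C j - real (\<Sum>x\<in>insert t A. w x j))"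
    for j
    using le_C[of j] unfolding sum_insert by (intro divide_left_mono) (auto simp: C_def)
  obtain j where j: "j < M" "0 < w t j" using assms(4) by blast
  have "C j / (C j - real (\<Sum>x\<in>A. w x j)) < C j / (C j - real (\<Sum>x\<in>insert t A. w x j))"
    using le_C[of j] j(2) unfolding sum_insert
    by (intro divide_strict_left_mono) (auto simp: C_def)
  then show ?thesis
    unfolding Qerr_def C_def[symmetric] using term_le j(1)
    by (intro sum_strict_mono_ex1) auto
qed

lemma Qerr_empty: "Qerr R M w {} = real M"
  unfolding Qerr_def by simp

definition gain_ratio_min :: "'a set \<Rightarrow> ('a set \<Rightarrow> real) \<Rightarrow> real" where
  "gain_ratio_min R Q = Min {(Q (insert t A) - Q A) / (Q (insert t B) - Q B) | t A B.
                              t \<in> R \<and> A \<subseteq> R - {t} \<and> B \<subseteq> R - {t}}"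

lemma kappa_eq_gain_ratio_min: "kappa R M w = 1 - gain_ratio_min R (Qerr R M w)"
  unfolding kappa_def gain_ratio_min_def ..

lemma gain_ratio_min_le:
  assumes "finite R" "t \<in> R" "A \<subseteq> R - {t}" "B \<subseteq> R - {t}"
  shows "gain_ratio_min R Q \<le> (Q (insert t A) - Q A) / (Q (insert t B) - Q B)"
proof -
  let ?ratio = "\<lambda>(t, A, B). (Q (insert t A) - Q A) / (Q (insert t B) - Q B)"
  have "{(Q (insert t A) - Q A) / (Q (insert t B) - Q B) | t A B.
          t \<in> R \<and> A \<subseteq> R - {t} \<and> B \<subseteq> R - {t}} \<subseteq> ?ratio ` (R \<times> Pow R \<times> Pow R)"
    (is "?ratios \<subseteq> _") by force
  then have "finite ?ratios"
    by (rule finite_subset) (simp add: assms(1))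
  then show ?thesis
    unfolding gain_ratio_min_def by (rule Min_le) (use assms(2-4) in blast)
qed

lemma gain_ratio_min_mult_le:
  assumes "finite R" "t \<in> R" "A \<subseteq> R - {t}" "B \<subseteq> R - {t}" "Q B < Q (insert t B)"
  shows "gain_ratio_min R Q * (Q (insert t B) - Q B) \<le> Q (insert t A) - Q A"
  using gain_ratio_min_le[OF assms(1-4), of Q] assms(5) by (simp add: pos_le_divide_eq)

lemma gain_ratio_min_le_one:
  assumes "finite R" "t \<in> R" "Q {} < Q {t}"
  shows "gain_ratio_min R Q \<le> 1"
  using gain_ratio_min_le[OF assms(1,2), of "{}" "{}" Q] assms(3) by simp

theorem theorem4p3:
  fixes R :: "'a set" and M K :: nat and w :: "'a \<Rightarrow> nat \<Rightarrow> nat"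
    and Opt :: "'a set" and D :: "nat \<Rightarrow> 'a set"
  assumes "finite R" and "R \<noteq> {}"
    and "\<forall>t\<in>R. \<exists>j<M. w t j > 0"
    and "K \<le> card R"
    and "optimal_deletion R M w K Opt"
    and "greedy_run R M w K D"
  shows "Qerr R M w (D K) \<ge> (1 - kappa R M w) * Qerr R M w Opt"
proof -
  let ?Q = "Qerr R M w" and ?m = "gain_ratio_min R (Qerr R M w)"
  have gain_pos: "?Q A < ?Q (insert t A)" if "t \<in> R" "A \<subseteq> R - {t}" for t A
    using Qerr_insert_less[of R A t M w] assms(1,3) that by auto
  obtain d where "greedy_selection R ?Q K D d"
    using greedy_run_obtains_selection[OF assms(6)] .
  moreover have "Opt \<subseteq> R" "card Opt \<le> K"
    using assms(5) unfolding optimal_deletion_def by auto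
  ultimately have "?m * (?Q Opt - ?Q {}) \<le> ?Q (D K) - ?Q {}"
    using assms(1) gain_pos gain_ratio_min_mult_le[OF assms(1)]
    by (intro greedy_selection.greedy_ratio_bound) (auto intro: less_imp_le finite_subset)
  moreover obtain t where "t \<in> R" using assms(2) by blast
  then have "?m \<le> 1"
    using gain_ratio_min_le_one[OF assms(1)] gain_pos[of t "{}"] by simp
  then have "0 \<le> (1 - ?m) * real M"
    by simp
  ultimately show ?thesis
    unfolding kappa_eq_gain_ratio_min Qerr_empty by (simp add: algebra_simps)
qed

end
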